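(* Let $\mathcal{B}=\langle V,F,E\rangle$ be a finite bipartite graph and $W\subseteq V$ such that the subgraph $\mathcal{B}'$ of $\mathcal{B}$ induced by $(V\setminus W)\cup F$ is self-contained. Then for every perfect matching $M$ of $\mathcal{B}'$, the output of Algorithm 2 (causal ordering via the perfect matching $M$) applied to $(W,\mathcal{B})$ coincides with the output of Algorithm 1 applied to $(W,\mathcal{B})$.
   Context: A bipartite graph $\mathcal{B}=\langle V,F,E\rangle$ has disjoint vertex sets $V$, $F$ and undirected edges $(v-f)$ with $v\in V$, $f\in F$; $\mathrm{adj}_{\mathcal{B}}(X)$ denotes the set of vertices adjacent to some vertex of $X$. A set $F'\subseteq F$ is self-contained if $|F'|=|\mathrm{adj}_{\mathcal{B}}(F')|$ and $|F''|\le|\mathrm{adj}_{\mathcal{B}}(F'')|$ for all $F''\subseteq F'$; $\mathcal{B}$ is self-contained if $|F|=|V|$ and $F$ is self-contained; a non-empty self-contained set is minimal self-contained if no non-empty strict subset is self-contained. A matching is a set of edges with no common endpoints; it is perfect if every vertex is matched. For a matching $M$ and a set of vertices $X$, $M(X)$ is the set of vertices matched by $M$ to some vertex of $X$. A directed cluster graph is a pair $\langle\mathcal{V},\mathcal{E}\rangle$ with $\mathcal{V}$ a partition of a vertex set and $\mathcal{E}$ a set of edges $x\to C$ from vertices to clusters. Algorithm 1. Initialize $\mathcal{E}=\emptyset$, $\mathcal{V}=\{\{w\}:w\in W\}$, $\mathcal{B}'=\langle V',F',E'\rangle$ the subgraph induced by $(V\setminus W)\cup F$. While $\mathcal{B}'$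 is not the null graph: choose a minimal self-contained set $S_F\subseteq F'$ of $\mathcal{B}'$; let $C=S_F\cup\mathrm{adj}_{\mathcal{B}'}(S_F)$; add $C$ to $\mathcal{V}$; for every $v\in\mathrm{adj}_{\mathcal{B}}(S_F)\setminus\mathrm{adj}_{\mathcal{B}'}(S_F)$ add $v\to C$ to $\mathcal{E}$; replace $\mathcal{B}'$ by its subgraph induced by $(V'\cup F')\setminus C$. Output $\langle\mathcal{V},\mathcal{E}\rangle$. (Its output is independent of the choices made.) Algorithm 2 (with perfect matching $M$ of $\mathcal{B}'$). (i) Orient edges: form the directed graph $\mathcal{G}(\mathcal{B},M)$ on $V\cup F$ containing, for each $(v-f)\in E$, the edge $f\to v$ if $(v-f)\in M$ and the edge $v\to f$ otherwise. (ii) Construct clusters: let $\mathcal{V}'$ be the partition of $V\cup F$ into strongly connected components of $\mathcal{G}(\mathcal{B},M)$, and $\mathcal{E}'=\{x\to \mathrm{cl}(w): (x\to w)\text{ in }\mathcal{G}(\mathcal{B},M),\ x\notin\mathrm{cl}(w)\}$, where $\mathrm{cl}(w)$ is the component containing $w$. (iii) Merge clusters: $\mathcal{V}=\{S\cup M(S):S\in\mathcal{V}'\}$ and $\mathcal{E}=\{x\to S\cup M(S): (x\to S)\in\mathcal{E}',\ x\notin M(S)\}$. Output $\langle\mathcal{V},\mathcal{E}\rangle$. *)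

theory Defs
  imports Main
begin

definition bipartite :: "'a set \<Rightarrow> 'a set \<Rightarrow> ('a \<times> 'a) set \<Rightarrow> bool" where
  "bipartite V F E \<longleftrightarrow> V \<inter> F = {} \<and> E \<subseteq> V \<times> F"

definition adj :: "('a \<times> 'a) set \<Rightarrow> 'a set \<Rightarrow> 'a set" where
  "adj E X = {y. \<exists>x\<in>X. (x, y) \<in> E \<or> (y, x) \<in> E}"

definition induced_edges :: "('a \<times> 'a) set \<Rightarrow> 'a set \<Rightarrow> 'a set \<Rightarrow> ('a \<times> 'a) set" where
  "induced_edges E V' F' = E \<inter> (V' \<times> F')"

definition self_contained_set :: "'a set \<Rightarrow> ('a \<times> 'a) set \<Rightarrow> 'a set \<Rightarrow> bool" where
  "self_contained_set F E F' \<longleftrightarrow> F' \<subseteq> F \<and> card F' = card (adj E F') \<and>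
     (\<forall>F''. F'' \<subseteq> F' \<longrightarrow> card F'' \<le> card (adj E F''))"

definition self_contained :: "'a set \<Rightarrow> 'a set \<Rightarrow> ('a \<times> 'a) set \<Rightarrow> bool" where
  "self_contained V F E \<longleftrightarrow> card F = card V \<and> self_contained_set F E F"

definition minimal_self_contained :: "'a set \<Rightarrow> ('a \<times> 'a) set \<Rightarrow> 'a set \<Rightarrow> bool" where
  "minimal_self_contained F E S \<longleftrightarrow> S \<noteq> {} \<and> self_contained_set F E S \<and>
     (\<forall>S'. S' \<subset> S \<and> S' \<noteq> {} \<longrightarrow> \<not> self_contained_set F E S')"

type_synonym 'a cluster_graph = "'a set set \<times> ('a \<times> 'a set) set"

text \<open>Algorithm 1. State: (clusters, cluster edges, V', F') where the current graph B'
  is the subgraph of B = (V,F,E) induced by V' \<union> F'. One iteration of the loop:\<close>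
inductive alg1_step :: "('a \<times> 'a) set \<Rightarrow>
    ('a set set \<times> ('a \<times> 'a set) set \<times> 'a set \<times> 'a set) \<Rightarrow>
    ('a set set \<times> ('a \<times> 'a set) set \<times> 'a set \<times> 'a set) \<Rightarrow> bool"
  for E where
  "minimal_self_contained F' (induced_edges E V' F') S \<Longrightarrow>
   C = S \<union> adj (induced_edges E V' F') S \<Longrightarrow>
   alg1_step E (Vc, Ec, V', F')
     (insert C Vc, Ec \<union> {(v, C) | v. v \<in> adj E S - adj (induced_edges E V' F') S},
      V' - C, F' - C)"

text \<open>O is an output of (some run of) Algorithm 1 applied to (W, B): the loop runs
  from the initial state until B' is the null graph.\<close>
definition alg1_output :: "'a set \<Rightarrow> 'a set \<Rightarrow> ('a \<times> 'a) set \<Rightarrow> 'a set \<Rightarrow> 'a cluster_graph \<Rightarrow> bool" where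
  "alg1_output V F E W Out \<longleftrightarrow>
     (\<exists>Vc Ec. (alg1_step E)\<^sup>*\<^sup>* ({{w} | w. w \<in> W}, {}, V - W, F) (Vc, Ec, {}, {})
              \<and> Out = (Vc, Ec))"

definition matching :: "('a \<times> 'a) set \<Rightarrow> ('a \<times> 'a) set \<Rightarrow> bool" where
  "matching E M \<longleftrightarrow> M \<subseteq> E \<and>
     (\<forall>e\<in>M. \<forall>e'\<in>M. e \<noteq> e' \<longrightarrow> {fst e, snd e} \<inter> {fst e', snd e'} = {})"

definition perfect_matching :: "'a set \<Rightarrow> ('a \<times> 'a) set \<Rightarrow> ('a \<times> 'a) set \<Rightarrow> bool" where
  "perfect_matching X E M \<longleftrightarrow> matching E M \<and>
     (\<forall>x\<in>X. \<exists>e\<in>M. x = fst e \<or> x = snd e)"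

definition matched_to :: "('a \<times> 'a) set \<Rightarrow> 'a set \<Rightarrow> 'a set" where
  "matched_to M X = {y. \<exists>x\<in>X. (x, y) \<in> M \<or> (y, x) \<in> M}"

definition orient :: "('a \<times> 'a) set \<Rightarrow> ('a \<times> 'a) set \<Rightarrow> ('a \<times> 'a) set" where
  "orient E M = {(f, v) | v f. (v, f) \<in> E \<and> (v, f) \<in> M} \<union>
                {(v, f) | v f. (v, f) \<in> E \<and> (v, f) \<notin> M}"

definition scc :: "'a set \<Rightarrow> ('a \<times> 'a) set \<Rightarrow> 'a \<Rightarrow> 'a set" where
  "scc X G w = {x \<in> X. (w, x) \<in> G\<^sup>* \<and> (x, w) \<in> G\<^sup>*}"

definition alg2_clusters :: "'a set \<Rightarrow> 'a set \<Rightarrow> ('a \<times> 'a) set \<Rightarrow> ('a \<times> 'a) set \<Rightarrow> 'a cluster_graph" where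
  "alg2_clusters V F E M =
     (let G = orient E M; X = V \<union> F in
      (scc X G ` X,
       {(x, scc X G w) | x w. (x, w) \<in> G \<and> x \<notin> scc X G w}))"

definition alg2_output :: "'a set \<Rightarrow> 'a set \<Rightarrow> ('a \<times> 'a) set \<Rightarrow> ('a \<times> 'a) set \<Rightarrow> 'a cluster_graph" where
  "alg2_output V F E M =
     (let (Vc', Ec') = alg2_clusters V F E M in
      ({S \<union> matched_to M S | S. S \<in> Vc'},
       {(x, S \<union> matched_to M S) | x S. (x, S) \<in> Ec' \<and> x \<notin> matched_to M S}))"

end

theory Submission
  imports Defs
begin

(* For a set Q of F-vertices of the remaining graph, M(Q) is
   contained in adj(Q) and has the size of Q, so Q is self-contained iff adj(Q) = M(Q), i.e. iff
   no edge of G(B,M) enters Q \<union> M(Q) from the rest of the remaining graph. A minimal such Q is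
   therefore strongly connected in G(B,M), and Q \<union> adj(Q) is its strongly connected component
   merged with the M-partners. So each cluster removed by Algorithm 1 is a merged component of
   Algorithm 2 with the same incoming edges, while the unmatched vertices of W have no incoming
   edges in G(B,M) and stay singleton clusters in both algorithms. *)

lemma adj_bipartite_iff:
  assumes "bipartite V F E" and "Q \<subseteq> F"
  shows "v \<in> adj E Q \<longleftrightarrow> (\<exists>g\<in>Q. (v, g) \<in> E)"
  using assms unfolding bipartite_def adj_def by blast

lemma adj_induced_edges_iff:
  assumes "bipartite V F E" and "Q \<subseteq> F" and "Q \<subseteq> F'"
  shows "v \<in> adj (induced_edges E V' F') Q \<longleftrightarrow> v \<in> V' \<and> (\<exists>g\<in>Q. (v, g) \<in> E)"
  using assms unfolding bipartite_def adj_def induced_edges_def by blast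

lemma minimal_self_contained_exists:
  assumes "finite F'" and "F' \<noteq> {}" and "self_contained_set F' E' F'"
  obtains S where "minimal_self_contained F' E' S"
proof -
  let ?P = "\<lambda>Q. Q \<noteq> {} \<and> self_contained_set F' E' Q"
  have "?P F'"
    using assms(2,3) by simp
  then have "\<exists>S. ?P S \<and> (\<forall>Q. ?P Q \<longrightarrow> card S \<le> card Q)"
    by (rule ex_has_least_nat)
  then obtain S where S: "?P S" and least: "\<forall>Q. ?P Q \<longrightarrow> card S \<le> card Q"
    by blast
  have "finite S"
    using S assms(1) finite_subset unfolding self_contained_set_def by blast
  have "\<not> self_contained_set F' E' S'" if "S' \<subset> S" "S' \<noteq> {}" for S'
  proof
    assume "self_contained_set F' E' S'"
    then have "card S \<le> card S'"
      using least that(2) by blast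
    moreover have "card S' < card S"
      using psubset_card_mono[OF \<open>finite S\<close> that(1)] .
    ultimately show False
      by simp
  qed
  then have "minimal_self_contained F' E' S"
    using S unfolding minimal_self_contained_def by blast
  then show thesis ..
qed

locale bipartite_matching =
  fixes V F W :: "'a set" and E M :: "('a \<times> 'a) set"
  assumes finite_V: "finite V" and finite_F: "finite F" and bipartite: "bipartite V F E"
    and W_subset: "W \<subseteq> V"
    and perfect: "perfect_matching ((V - W) \<union> F) (induced_edges E (V - W) F) M"
begin

abbreviation "G \<equiv> orient E M"
abbreviation "X \<equiv> V \<union> F"
abbreviation "scc_of x \<equiv> scc X G x"
abbreviation "cluster x \<equiv> scc_of x \<union> matched_to M (scc_of x)"

lemma V_F_disjoint: "V \<inter> F = {}" and E_subset: "E \<subseteq> V \<times> F"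
  using bipartite unfolding bipartite_def by auto

lemma M_subset_E: "M \<subseteq> E" and M_subset: "M \<subseteq> (V - W) \<times> F"
  using perfect unfolding perfect_matching_def matching_def induced_edges_def by auto

lemma matched_disjoint: "e \<in> M \<Longrightarrow> e' \<in> M \<Longrightarrow> e \<noteq> e' \<Longrightarrow> {fst e, snd e} \<inter> {fst e', snd e'} = {}"
  using perfect unfolding perfect_matching_def matching_def by blast

lemma matched_unique_V: "(v, g) \<in> M \<Longrightarrow> (v', g) \<in> M \<Longrightarrow> v = v'"
  using matched_disjoint[of "(v, g)" "(v', g)"] by auto

lemma matched_unique_F: "(v, g) \<in> M \<Longrightarrow> (v, g') \<in> M \<Longrightarrow> g = g'"
  using matched_disjoint[of "(v, g)" "(v, g')"] by auto

lemma matched_covers: "x \<in> (V - W) \<union> F \<Longrightarrow> \<exists>v g. (v, g) \<in> M \<and> (x = v \<or> x = g)"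
  using perfect unfolding perfect_matching_def by fastforce

lemma F_matched: "g \<in> F \<Longrightarrow> \<exists>v. (v, g) \<in> M"
  and V_matched: "v \<in> V - W \<Longrightarrow> \<exists>g. (v, g) \<in> M"
  using matched_covers M_subset V_F_disjoint by blast+

lemma orient_iff: "(x, y) \<in> G \<longleftrightarrow> (y, x) \<in> M \<or> (x, y) \<in> E \<and> (x, y) \<notin> M"
  using M_subset_E unfolding orient_def by auto

lemma orient_vertices: "(x, y) \<in> G \<Longrightarrow> x \<in> X \<and> y \<in> X"
  using orient_iff E_subset M_subset_E by blast

lemma orient_into_F: "(x, y) \<in> G \<Longrightarrow> y \<in> F \<Longrightarrow> (x, y) \<in> E \<and> (x, y) \<notin> M"
  and orient_into_V: "(x, y) \<in> G \<Longrightarrow> y \<in> V \<Longrightarrow> (y, x) \<in> M"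
  and orient_from_F: "(x, y) \<in> G \<Longrightarrow> x \<in> F \<Longrightarrow> (y, x) \<in> M"
  using orient_iff E_subset M_subset_E V_F_disjoint by blast+

lemma orient_into_matched_unique: "(u, x) \<in> G \<Longrightarrow> (x, g) \<in> M \<Longrightarrow> u = g"
  using orient_into_V M_subset matched_unique_F by blast

lemma orient_from_matched_unique: "(g, y) \<in> G \<Longrightarrow> (x, g) \<in> M \<Longrightarrow> y = x"
  using orient_from_F M_subset matched_unique_V by blast

lemma matched_to_F: "Q \<subseteq> F \<Longrightarrow> matched_to M Q = {v. \<exists>g\<in>Q. (v, g) \<in> M}"
  unfolding matched_to_def using M_subset V_F_disjoint by blast

lemma matched_to_matched_to:
  assumes "Q \<subseteq> F"
  shows "matched_to M (matched_to M Q) = Q"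
proof (intro equalityI subsetI)
  fix y assume "y \<in> matched_to M (matched_to M Q)"
  then obtain v g where "g \<in> Q" "(v, g) \<in> M" "(v, y) \<in> M \<or> (y, v) \<in> M"
    using matched_to_F[OF assms] unfolding matched_to_def by blast
  moreover from this have "(v, y) \<in> M"
    using M_subset V_F_disjoint by blast
  ultimately show "y \<in> Q"
    using matched_unique_F by blast
next
  fix g assume "g \<in> Q"
  moreover from this obtain v where "(v, g) \<in> M"
    using F_matched assms by blast
  ultimately show "g \<in> matched_to M (matched_to M Q)"
    unfolding matched_to_def by blast
qed

lemma card_matched_to:
  assumes "Q \<subseteq> F"
  shows "card (matched_to M Q) = card Q"
proof -
  let ?M = "M \<inter> (UNIV \<times> Q)"
  have "matched_to M Q = fst ` ?M"
    using matched_to_F[OF assms] by force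
  moreover have "Q = snd ` ?M"
    using F_matched assms by force
  moreover have "inj_on fst ?M" and "inj_on snd ?M"
    unfolding inj_on_def using matched_unique_F matched_unique_V by auto
  ultimately show ?thesis
    using card_image by metis
qed

definition cluster_edges :: "'a set \<Rightarrow> ('a \<times> 'a set) set" where
  "cluster_edges A = {(v, cluster g) | v g. g \<in> A \<and> (v, g) \<in> E \<and> v \<notin> cluster g}"

lemma cluster_edges_Un: "cluster_edges (A \<union> B) = cluster_edges A \<union> cluster_edges B"
  unfolding cluster_edges_def by blast

definition closed_residual :: "'a set \<Rightarrow> 'a set \<Rightarrow> bool" where
  "closed_residual V' F' \<longleftrightarrow> F' \<subseteq> F \<and> V' \<subseteq> V - W \<and>
     (\<forall>v g. (v, g) \<in> M \<longrightarrow> (v \<in> V' \<longleftrightarrow> g \<in> F')) \<and> G `` (V' \<union> F') \<subseteq> V' \<union> F'"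

lemma closed_residual_reach:
  assumes "closed_residual V' F'" and "(x, y) \<in> G\<^sup>*" and "x \<in> V' \<union> F'"
  shows "y \<in> V' \<union> F'"
  using assms Image_closed_trancl[of G "V' \<union> F'"] unfolding closed_residual_def by blast

context
  fixes V' F' :: "'a set"
  assumes closed: "closed_residual V' F'"
begin

abbreviation "E' \<equiv> induced_edges E V' F'"

lemma residual_F: "F' \<subseteq> F" and residual_V: "V' \<subseteq> V - W"
  and residual_matched: "(v, g) \<in> M \<Longrightarrow> v \<in> V' \<longleftrightarrow> g \<in> F'"
  and residual_successor: "(x, y) \<in> G \<Longrightarrow> x \<in> V' \<union> F' \<Longrightarrow> y \<in> V' \<union> F'"
  using closed unfolding closed_residual_def by blast+

lemma adj_residual_iff:
  assumes "Q \<subseteq> F'"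
  shows "v \<in> adj E' Q \<longleftrightarrow> v \<in> V' \<and> (\<exists>g\<in>Q. (v, g) \<in> E)"
proof -
  have "Q \<subseteq> F"
    using assms residual_F by blast
  then show ?thesis
    using adj_induced_edges_iff[OF bipartite _ assms] by simp
qed

lemma matched_to_subset_adj:
  assumes "Q \<subseteq> F'"
  shows "matched_to M Q \<subseteq> adj E' Q"
proof
  fix v assume "v \<in> matched_to M Q"
  moreover have "Q \<subseteq> F"
    using assms residual_F by blast
  ultimately obtain g where "g \<in> Q" and "(v, g) \<in> M"
    using matched_to_F by blast
  moreover from this have "v \<in> V'"
    using residual_matched assms by auto
  ultimately show "v \<in> adj E' Q"
    unfolding adj_residual_iff[OF assms] using M_subset_E by blast
qed

lemma finite_adj_residual:
  assumes "Q \<subseteq> F'"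
  shows "finite (adj E' Q)"
proof -
  have "adj E' Q \<subseteq> V"
    using residual_V by (auto simp: adj_residual_iff[OF assms])
  then show ?thesis
    using finite_V finite_subset by blast
qed

lemma self_contained_set_iff:
  assumes Q: "Q \<subseteq> F'"
  shows "self_contained_set F' E' Q \<longleftrightarrow> adj E' Q \<subseteq> matched_to M Q"
proof
  assume "self_contained_set F' E' Q"
  then have "card (matched_to M Q) = card (adj E' Q)"
    using card_matched_to[of Q] Q residual_F unfolding self_contained_set_def by auto
  then show "adj E' Q \<subseteq> matched_to M Q"
    using card_subset_eq[OF finite_adj_residual[OF Q] matched_to_subset_adj[OF Q]] by simp
next
  assume "adj E' Q \<subseteq> matched_to M Q"
  then have "card (adj E' Q) = card Q"
    using matched_to_subset_adj[OF Q] card_matched_to[of Q] Q residual_F by auto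
  moreover have "card Q' \<le> card (adj E' Q')" if "Q' \<subseteq> Q" for Q'
  proof -
    have Q': "Q' \<subseteq> F'"
      using that Q by blast
    then have "card Q' = card (matched_to M Q')"
      using card_matched_to[of Q'] residual_F by auto
    also have "\<dots> \<le> card (adj E' Q')"
      using card_mono[OF finite_adj_residual[OF Q'] matched_to_subset_adj[OF Q']] .
    finally show ?thesis .
  qed
  ultimately show "self_contained_set F' E' Q"
    using Q unfolding self_contained_set_def by auto
qed

lemma residual_self_contained: "self_contained_set F' E' F'"
proof -
  have "adj E' F' \<subseteq> matched_to M F'"
  proof
    fix v assume "v \<in> adj E' F'"
    then have "v \<in> V'"
      unfolding adj_residual_iff[OF order_refl] by blast
    then obtain g where "(v, g) \<in> M" and "g \<in> F'"
      using V_matched residual_V residual_matched by blast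
    then show "v \<in> matched_to M F'"
      unfolding matched_to_def by blast
  qed
  then show ?thesis
    using self_contained_set_iff by blast
qed

lemma matched_to_residual:
  assumes "Q \<subseteq> F'"
  shows "matched_to M Q = {v. \<exists>g\<in>Q. (v, g) \<in> M}" and "matched_to M Q \<subseteq> V - W"
proof -
  have "Q \<subseteq> F"
    using assms residual_F by blast
  then show "matched_to M Q = {v. \<exists>g\<in>Q. (v, g) \<in> M}"
    by (rule matched_to_F)
  then show "matched_to M Q \<subseteq> V - W"
    using M_subset by blast
qed

text \<open>The only G-successor of a vertex of F is its mate, and a vertex of V' pointing into S is
  adjacent to S; so when adj(S) \<subseteq> M(S), no edge enters S \<union> M(S) from the rest of V' \<union> F'.\<close>
lemma predecessor_in_closed_cluster:
  assumes S: "S \<subseteq> F'" and adj_S: "adj E' S \<subseteq> matched_to M S"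
    and yz: "(y, z) \<in> G" and y: "y \<in> V' \<union> F'" and z: "z \<in> S \<union> matched_to M S"
  shows "y \<in> S \<union> matched_to M S"
proof (cases "y \<in> F")
  case True
  then have zy: "(z, y) \<in> M"
    using orient_from_F yz by blast
  then have "z \<notin> S"
    using S residual_F M_subset V_F_disjoint by blast
  then obtain h where "h \<in> S" and "(z, h) \<in> M"
    using z matched_to_residual(1)[OF S] by blast
  then show ?thesis
    using matched_unique_F zy by blast
next
  case False
  then have "y \<in> V'"
    using y residual_F by blast
  have "z \<in> F"
    using orient_vertices[OF yz] orient_into_V[OF yz] M_subset False by blast
  then have "(y, z) \<in> E" and "z \<in> S"
    using orient_into_F[OF yz] z matched_to_residual(2)[OF S] V_F_disjoint by blast+
  then have "y \<in> adj E' S"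
    unfolding adj_residual_iff[OF S] using \<open>y \<in> V'\<close> by blast
  then show ?thesis
    using adj_S by blast
qed

lemma ancestor_in_closed_cluster:
  assumes S: "S \<subseteq> F'" and adj_S: "adj E' S \<subseteq> matched_to M S"
    and "(y, z) \<in> G\<^sup>*" and "y \<in> V' \<union> F'" and "z \<in> S \<union> matched_to M S"
  shows "y \<in> S \<union> matched_to M S"
  using assms(3,4)
proof (induction rule: converse_rtrancl_induct)
  case base
  then show ?case using assms(5) by simp
next
  case (step y y')
  then show ?case
    using predecessor_in_closed_cluster[OF S adj_S] residual_successor by blast
qed

context
  fixes S :: "'a set"
  assumes minimal: "minimal_self_contained F' E' S"
begin

lemma minimal_subset: "S \<subseteq> F'" and minimal_nonempty: "S \<noteq> {}"
  using minimal unfolding minimal_self_contained_def self_contained_set_def by blast+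

lemma minimal_adj: "adj E' S = matched_to M S"
  using minimal self_contained_set_iff[OF minimal_subset] matched_to_subset_adj[OF minimal_subset]
  unfolding minimal_self_contained_def by blast

text \<open>The vertices of F' from which f is reachable form a self-contained subset of S.\<close>
lemma minimal_reaches:
  assumes f: "f \<in> S" and g: "g \<in> S"
  shows "(g, f) \<in> G\<^sup>*"
proof -
  define P where "P = {h \<in> F'. (h, f) \<in> G\<^sup>*}"
  have P: "P \<subseteq> F'"
    unfolding P_def by blast
  have "P \<subseteq> S"
  proof
    fix h assume "h \<in> P"
    then have "h \<in> S \<union> matched_to M S" and "h \<in> F"
      using ancestor_in_closed_cluster[OF minimal_subset] minimal_adj f residual_F
      unfolding P_def by auto
    then show "h \<in> S"
      using matched_to_residual(2)[OF minimal_subset] V_F_disjoint by blast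
  qed
  moreover have "f \<in> P"
    using f minimal_subset unfolding P_def by blast
  moreover have "adj E' P \<subseteq> matched_to M P"
  proof
    fix v assume "v \<in> adj E' P"
    then obtain h where v: "v \<in> V'" and h: "h \<in> P" and vh: "(v, h) \<in> E"
      unfolding adj_residual_iff[OF P] by blast
    obtain k where k: "(v, k) \<in> M"
      using V_matched v residual_V by blast
    show "v \<in> matched_to M P"
    proof (cases "(v, h) \<in> M")
      case True
      then show ?thesis
        using h unfolding matched_to_def by blast
    next
      case False
      then have "(k, v) \<in> G" and "(v, h) \<in> G"
        using k vh orient_iff by blast+
      moreover have "k \<in> F'"
        using residual_matched[OF k] v by blast
      ultimately have "k \<in> P"
        using h unfolding P_def by auto
      then show ?thesis
        using k unfolding matched_to_def by blast
    qed
  qed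
  ultimately have "P = S"
    using minimal self_contained_set_iff[OF P] unfolding minimal_self_contained_def by blast
  then show ?thesis
    using g unfolding P_def by blast
qed

lemma minimal_cluster:
  assumes f: "f \<in> S"
  shows "S \<union> adj E' S = cluster f"
proof -
  have "S \<subseteq> scc_of f"
    using minimal_reaches f minimal_subset residual_F unfolding scc_def by blast
  moreover have "scc_of f \<subseteq> S \<union> matched_to M S"
  proof
    fix y assume "y \<in> scc_of f"
    then have "(y, f) \<in> G\<^sup>*" and "(f, y) \<in> G\<^sup>*"
      unfolding scc_def by blast+
    moreover from this have "y \<in> V' \<union> F'"
      using closed_residual_reach[OF closed] f minimal_subset by blast
    ultimately show "y \<in> S \<union> matched_to M S"
      using ancestor_in_closed_cluster[OF minimal_subset] minimal_adj f by blast
  qed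
  moreover have "matched_to M (S \<union> matched_to M S) = S \<union> matched_to M S"
  proof -
    have "S \<subseteq> F"
      using minimal_subset residual_F by blast
    then have "matched_to M (matched_to M S) = S"
      by (rule matched_to_matched_to)
    then show ?thesis
      unfolding matched_to_def by blast
  qed
  ultimately show ?thesis
    unfolding minimal_adj matched_to_def by blast
qed

lemma minimal_cluster_F: "(S \<union> adj E' S) \<inter> F = S"
  and minimal_cluster_V: "(S \<union> adj E' S) \<inter> V = matched_to M S"
  using minimal_subset residual_F matched_to_residual(2)[OF minimal_subset] V_F_disjoint
  unfolding minimal_adj by blast+

lemma closed_residual_Diff_minimal_cluster:
  "closed_residual (V' - (S \<union> adj E' S)) (F' - (S \<union> adj E' S))"
  unfolding closed_residual_def
proof (intro conjI allI impI)
  fix v g assume vg: "(v, g) \<in> M"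
  then have "v \<in> matched_to M S \<longleftrightarrow> g \<in> S"
    using matched_to_residual(1)[OF minimal_subset] matched_unique_F by blast
  moreover have "v \<in> V" and "g \<in> F"
    using vg M_subset by blast+
  ultimately have "v \<in> S \<union> adj E' S \<longleftrightarrow> g \<in> S \<union> adj E' S"
    using minimal_cluster_F minimal_cluster_V by blast
  then show "v \<in> V' - (S \<union> adj E' S) \<longleftrightarrow> g \<in> F' - (S \<union> adj E' S)"
    using residual_matched[OF vg] by blast
next
  show "G `` (V' - (S \<union> adj E' S) \<union> (F' - (S \<union> adj E' S)))
      \<subseteq> V' - (S \<union> adj E' S) \<union> (F' - (S \<union> adj E' S))"
    using predecessor_in_closed_cluster[OF minimal_subset] minimal_adj residual_successor
    by blast
qed (use residual_F residual_V in auto)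

lemma cluster_edges_minimal:
  "cluster_edges S = {(v, S \<union> adj E' S) | v. v \<in> adj E S - adj E' S}"
proof -
  have "S \<subseteq> F"
    using minimal_subset residual_F by blast
  note adj_S = adj_bipartite_iff[OF bipartite this]
  have cluster_S: "cluster g = S \<union> adj E' S" if "g \<in> S" for g
    using minimal_cluster[OF that] by simp
  show ?thesis
  proof (intro equalityI subsetI)
    fix e assume "e \<in> cluster_edges S"
    then obtain v g where "e = (v, cluster g)" "g \<in> S" "(v, g) \<in> E" "v \<notin> cluster g"
      unfolding cluster_edges_def by blast
    moreover from this have "v \<in> adj E S"
      using adj_S by blast
    ultimately show "e \<in> {(v, S \<union> adj E' S) | v. v \<in> adj E S - adj E' S}"
      using cluster_S by simp
  next
    fix e assume "e \<in> {(v, S \<union> adj E' S) | v. v \<in> adj E S - adj E' S}"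
    then obtain v where e: "e = (v, S \<union> adj E' S)" "v \<notin> adj E' S" "v \<in> adj E S"
      by blast
    then obtain g where g: "g \<in> S" "(v, g) \<in> E"
      using adj_S by blast
    then have "v \<notin> S"
      using \<open>S \<subseteq> F\<close> E_subset V_F_disjoint by blast
    then show "e \<in> cluster_edges S"
      unfolding cluster_edges_def using e g cluster_S by blast
  qed
qed

end

end

definition alg1_invariant ::
    "'a set set \<times> ('a \<times> 'a set) set \<times> 'a set \<times> 'a set \<Rightarrow> bool" where
  "alg1_invariant = (\<lambda>(Vc, Ec, V', F'). closed_residual V' F' \<and>
     Vc = {{w} | w. w \<in> W} \<union> cluster ` (F - F') \<and> Ec = cluster_edges (F - F'))"

lemma alg1_step_invariant:
  assumes "alg1_step E st st'" and "alg1_invariant st"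
  shows "alg1_invariant st'"
  using assms(1)
proof cases
  case (1 F' V' S C Vc Ec)
  have closed: "closed_residual V' F'"
    and Vc: "Vc = {{w} | w. w \<in> W} \<union> cluster ` (F - F')"
    and Ec: "Ec = cluster_edges (F - F')"
    using assms(2) unfolding 1 alg1_invariant_def by simp_all
  note S = \<open>minimal_self_contained F' (induced_edges E V' F') S\<close>
  have F_removed: "F - (F' - C) = (F - F') \<union> S"
    using 1 minimal_cluster_F[OF closed S] minimal_subset[OF closed S] residual_F[OF closed]
    by blast
  have "cluster f = C" if "f \<in> S" for f
    using minimal_cluster[OF closed S that] 1(4) by simp
  then have "cluster ` S = {C}"
    using minimal_nonempty[OF closed S] by auto
  then have "cluster ` (F - (F' - C)) = insert C (cluster ` (F - F'))"
    unfolding F_removed image_Un by simp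
  moreover have "cluster_edges S = {(v, C) | v. v \<in> adj E S - adj (induced_edges E V' F') S}"
    unfolding 1(4) by (rule cluster_edges_minimal[OF closed S])
  then have "cluster_edges (F - (F' - C)) =
      Ec \<union> {(v, C) | v. v \<in> adj E S - adj (induced_edges E V' F') S}"
    unfolding F_removed cluster_edges_Un Ec by simp
  ultimately show ?thesis
    unfolding 1 alg1_invariant_def
    using closed_residual_Diff_minimal_cluster[OF closed S] Vc by auto
qed

lemma alg1_invariant_init: "alg1_invariant ({{w} | w. w \<in> W}, {}, V - W, F)"
proof -
  have "G `` (V - W \<union> F) \<subseteq> V - W \<union> F"
    using orient_vertices orient_into_V M_subset by blast
  then have "closed_residual (V - W) F"
    unfolding closed_residual_def using M_subset by blast
  then show ?thesis
    unfolding alg1_invariant_def cluster_edges_def by simp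
qed

lemma alg1_invariant_rtranclp:
  "(alg1_step E)\<^sup>*\<^sup>* st st' \<Longrightarrow> alg1_invariant st \<Longrightarrow> alg1_invariant st'"
  by (induction rule: rtranclp_induct) (auto intro: alg1_step_invariant)

lemma alg1_terminates:
  assumes "closed_residual V' F'"
  shows "\<exists>Vc' Ec'. (alg1_step E)\<^sup>*\<^sup>* (Vc, Ec, V', F') (Vc', Ec', {}, {})"
  using assms
proof (induction "card F'" arbitrary: Vc Ec V' F' rule: less_induct)
  case less
  note closed = less.prems
  show ?case
  proof (cases "F' = {}")
    case True
    then have "V' = {}"
      using V_matched residual_V[OF closed] residual_matched[OF closed] by blast
    with True show ?thesis
      by blast
  next
    case False
    have "finite F'"
      using residual_F[OF closed] finite_F finite_subset by blast
    then obtain S where S: "minimal_self_contained F' (induced_edges E V' F') S"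
      using minimal_self_contained_exists False residual_self_contained[OF closed] by blast
    define C where "C = S \<union> adj (induced_edges E V' F') S"
    have step: "alg1_step E (Vc, Ec, V', F')
        (insert C Vc, Ec \<union> {(v, C) | v. v \<in> adj E S - adj (induced_edges E V' F') S}, V' - C, F' - C)"
      using alg1_step.intros[OF S C_def] .
    have "F' - C \<subset> F'"
      using minimal_subset[OF closed S] minimal_nonempty[OF closed S] C_def by blast
    then have "card (F' - C) < card F'"
      using psubset_card_mono \<open>finite F'\<close> by blast
    then show ?thesis
      using less.hyps closed_residual_Diff_minimal_cluster[OF closed S] step C_def
      by (meson converse_rtranclp_into_rtranclp)
  qed
qed

lemma scc_of_refl: "x \<in> X \<Longrightarrow> x \<in> scc_of x"
  unfolding scc_def by simp

lemma scc_of_eq: "(x, y) \<in> G\<^sup>* \<Longrightarrow> (y, x) \<in> G\<^sup>* \<Longrightarrow> scc_of x = scc_of y"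
  unfolding scc_def by (meson rtrancl_trans)

lemma cluster_W:
  assumes w: "w \<in> W"
  shows "cluster w = {w}"
proof -
  have "(u, w) \<notin> G" for u
    using orient_into_V M_subset w W_subset by blast
  then have "scc_of w = {w}"
    using scc_of_refl w W_subset unfolding scc_def by (auto elim: rtranclE)
  moreover have "matched_to M {w} = {}"
    unfolding matched_to_def using M_subset w V_F_disjoint W_subset by blast
  ultimately show ?thesis
    by simp
qed

text \<open>The mate g is the only G-predecessor of x and x is the only G-successor of g; so either
  x and g lie on a common cycle, or both are singleton components.\<close>
lemma cluster_matched:
  assumes xg: "(x, g) \<in> M"
  shows "cluster x = cluster g"
proof (cases "(x, g) \<in> G\<^sup>*")
  case True
  moreover have "(g, x) \<in> G"
    using xg orient_iff by blast
  ultimately have "scc_of x = scc_of g"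
    using scc_of_eq by blast
  then show ?thesis
    by simp
next
  case False
  have "x \<in> X" and "g \<in> X"
    using xg M_subset by auto
  have "y = x" if "y \<in> scc_of x" for y
  proof (rule ccontr)
    assume "y \<noteq> x"
    moreover have "(y, x) \<in> G\<^sup>*" and "(x, y) \<in> G\<^sup>*"
      using that unfolding scc_def by auto
    ultimately obtain u where "(x, u) \<in> G\<^sup>*" and "(u, x) \<in> G"
      by (metis rtrancl_trans rtranclE)
    then show False
      using False orient_into_matched_unique xg by blast
  qed
  then have "scc_of x = {x}"
    using scc_of_refl \<open>x \<in> X\<close> by blast
  moreover have "y = g" if "y \<in> scc_of g" for y
  proof (rule ccontr)
    assume "y \<noteq> g"
    moreover have "(y, g) \<in> G\<^sup>*" and "(g, y) \<in> G\<^sup>*"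
      using that unfolding scc_def by auto
    ultimately obtain u where "(g, u) \<in> G" and "(u, g) \<in> G\<^sup>*"
      by (metis rtrancl_trans converse_rtranclE)
    then show False
      using False orient_from_matched_unique xg by blast
  qed
  then have "scc_of g = {g}"
    using scc_of_refl \<open>g \<in> X\<close> by blast
  moreover have "matched_to M {x} = {g}" and "matched_to M {g} = {x}"
    unfolding matched_to_def using xg matched_unique_F matched_unique_V M_subset V_F_disjoint
    by blast+
  ultimately show ?thesis
    by auto
qed

lemma alg2_output_clusters:
  "alg2_output V F E M = (cluster ` X, {(x, cluster w) | x w. (x, w) \<in> G \<and> x \<notin> cluster w})"
proof -
  have "{S \<union> matched_to M S | S. S \<in> scc_of ` X} = cluster ` X"
    by blast
  moreover have "{(x, S \<union> matched_to M S) | x S.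
      (x, S) \<in> {(x, scc_of w) | x w. (x, w) \<in> G \<and> x \<notin> scc_of w} \<and> x \<notin> matched_to M S} =
    {(x, cluster w) | x w. (x, w) \<in> G \<and> x \<notin> cluster w}"
    by blast
  ultimately show ?thesis
    unfolding alg2_output_def alg2_clusters_def Let_def by simp
qed

lemma mate_in_cluster: "(w, x) \<in> M \<or> (x, w) \<in> M \<Longrightarrow> x \<in> cluster w"
  using scc_of_refl M_subset unfolding matched_to_def by blast

lemma alg2_output_eq:
  "alg2_output V F E M = ({{w} | w. w \<in> W} \<union> cluster ` F, cluster_edges F)"
proof -
  have "cluster ` (V - W) \<subseteq> cluster ` F"
  proof
    fix c assume "c \<in> cluster ` (V - W)"
    then obtain x g where "c = cluster x" and "(x, g) \<in> M"
      using V_matched by blast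
    then show "c \<in> cluster ` F"
      using cluster_matched M_subset by blast
  qed
  moreover have "cluster ` W = {{w} | w. w \<in> W}"
    using cluster_W by auto
  moreover have "X = W \<union> (V - W) \<union> F"
    using W_subset by blast
  then have "cluster ` X = cluster ` W \<union> cluster ` (V - W) \<union> cluster ` F"
    by (simp only: image_Un)
  ultimately have "cluster ` X = {{w} | w. w \<in> W} \<union> cluster ` F"
    by (simp add: sup_assoc sup.absorb2)
  moreover have "{(x, cluster w) | x w. (x, w) \<in> G \<and> x \<notin> cluster w} = cluster_edges F"
  proof (intro equalityI subsetI)
    fix e assume "e \<in> {(x, cluster w) | x w. (x, w) \<in> G \<and> x \<notin> cluster w}"
    then obtain x w where e: "e = (x, cluster w)" and xw: "(x, w) \<in> G" "x \<notin> cluster w"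
      by blast
    then have "w \<in> F"
      using orient_vertices orient_into_V mate_in_cluster by blast
    then show "e \<in> cluster_edges F"
      unfolding cluster_edges_def using e xw orient_into_F by blast
  next
    fix e assume "e \<in> cluster_edges F"
    then obtain v g where e: "e = (v, cluster g)" and vg: "(v, g) \<in> E" "v \<notin> cluster g"
      unfolding cluster_edges_def by blast
    then have "(v, g) \<in> G"
      using orient_iff mate_in_cluster by blast
    then show "e \<in> {(x, cluster w) | x w. (x, w) \<in> G \<and> x \<notin> cluster w}"
      using e vg by blast
  qed
  ultimately show ?thesis
    unfolding alg2_output_clusters by simp
qed

end

theorem theorem6:
  fixes V F W :: "'a set" and E :: "('a \<times> 'a) set"
  assumes "finite V" and "finite F" and "bipartite V F E" and "W \<subseteq> V"
    and "self_contained (V - W) F (induced_edges E (V - W) F)"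
  shows "\<forall>M. perfect_matching ((V - W) \<union> F) (induced_edges E (V - W) F) M \<longrightarrow>
           (\<exists>Out. alg1_output V F E W Out) \<and>
           (\<forall>Out. alg1_output V F E W Out \<longrightarrow> alg2_output V F E M = Out)"
proof (intro allI impI)
  fix M assume "perfect_matching ((V - W) \<union> F) (induced_edges E (V - W) F) M"
  then interpret bipartite_matching V F W E M
    using assms(1-4) by unfold_locales
  have "closed_residual (V - W) F"
    using alg1_invariant_init unfolding alg1_invariant_def by simp
  then have "\<exists>Out. alg1_output V F E W Out"
    using alg1_terminates unfolding alg1_output_def by blast
  moreover have "alg2_output V F E M = Out" if run: "alg1_output V F E W Out" for Out
  proof -
    obtain Vc Ec where Out: "Out = (Vc, Ec)"
      and "(alg1_step E)\<^sup>*\<^sup>* ({{w} | w. w \<in> W}, {}, V - W, F) (Vc, Ec, {}, {})"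
      using run unfolding alg1_output_def by blast
    then have "alg1_invariant (Vc, Ec, {}, {})"
      using alg1_invariant_rtranclp alg1_invariant_init by blast
    then show ?thesis
      unfolding Out alg2_output_eq alg1_invariant_def by simp
  qed
  ultimately show "(\<exists>Out. alg1_output V F E W Out) \<and>
      (\<forall>Out. alg1_output V F E W Out \<longrightarrow> alg2_output V F E M = Out)"
    by blast
qed

end
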